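(* Let $w\ge 2$ and $n$ be positive integers such that $n\equiv 1\pmod{w-1}$ and $n(n-1)-n(w-1)(w-2)\equiv (2k+1)(w-1)\pmod{w(w-1)}$ for some integer $k\in[0,\frac{w-3}{2}]$. Let $B(n)=\left\lfloor\frac{n(n-1-(w-1)(w-2))}{w(w-1)}\right\rfloor$. If $\mathcal C$ is a balanced $(n,2w-2,w)_3$ code of size $B(n)+n$, then $\mathcal C$ contains a codeword which is neither of type $1^w$ nor of type $1^{w-2}2^1$.
   Context: A ternary code of length $n$ is a subset of $\{0,1,2\}^n$; the $\ell_1$-distance is $\sum_i|u_i-v_i|$ and the $\ell_1$-weight of $u$ is its distance to $0$. An $(n,d,w)_3$ code has all codewords of $\ell_1$-weight $w$ and pairwise $\ell_1$-distance at least $d$. A codeword is of type $1^a2^b$ if exactly $a$ of its coordinates equal $1$ and exactly $b$ equal $2$ (so $a+2b=w$). The support of $u$ is $\{i:u_i\ne0\}$. A code is balanced if the supports of its codewords, viewed as vertex sets of cliques in $K_n$ on $[n]$, form an edge-decomposition of $K_n$. *)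

theory Defs
  imports Complex_Main "HOL-Number_Theory.Cong"
begin

definition ternary_word :: "nat \<Rightarrow> (nat \<Rightarrow> nat) \<Rightarrow> bool" where
  "ternary_word n u \<longleftrightarrow> (\<forall>i<n. u i \<le> 2) \<and> (\<forall>i\<ge>n. u i = 0)"

definition l1_dist :: "nat \<Rightarrow> (nat \<Rightarrow> nat) \<Rightarrow> (nat \<Rightarrow> nat) \<Rightarrow> nat" where
  "l1_dist n u v = (\<Sum>i<n. nat \<bar>int (u i) - int (v i)\<bar>)"

definition l1_weight :: "nat \<Rightarrow> (nat \<Rightarrow> nat) \<Rightarrow> nat" where
  "l1_weight n u = l1_dist n u (\<lambda>_. 0)"

definition supp :: "nat \<Rightarrow> (nat \<Rightarrow> nat) \<Rightarrow> nat set" where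
  "supp n u = {i. i < n \<and> u i \<noteq> 0}"

definition ternary_code :: "nat \<Rightarrow> nat \<Rightarrow> nat \<Rightarrow> (nat \<Rightarrow> nat) set \<Rightarrow> bool" where
  "ternary_code n d w C \<longleftrightarrow>
     (\<forall>u\<in>C. ternary_word n u \<and> l1_weight n u = w) \<and>
     (\<forall>u\<in>C. \<forall>v\<in>C. u \<noteq> v \<longrightarrow> l1_dist n u v \<ge> d)"

text \<open>Balanced: the supports, as cliques of K_n, edge-decompose K_n, i.e. every
edge {i,j} of K_n lies in the support of exactly one codeword.\<close>
definition balanced :: "nat \<Rightarrow> (nat \<Rightarrow> nat) set \<Rightarrow> bool" where
  "balanced n C \<longleftrightarrow>
     (\<forall>i j. i < n \<longrightarrow> j < n \<longrightarrow> i \<noteq> j \<longrightarrow> (\<exists>!u. u \<in> C \<and> {i, j} \<subseteq> supp n u))"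

definition has_type :: "nat \<Rightarrow> nat \<Rightarrow> nat \<Rightarrow> (nat \<Rightarrow> nat) \<Rightarrow> bool" where
  "has_type n a b u \<longleftrightarrow> card {i. i < n \<and> u i = 1} = a \<and> card {i. i < n \<and> u i = 2} = b"

end

theory Submission
  imports Defs
begin

text \<open>Since every edge of K_n lies in exactly one support, counting ordered pairs of
  distinct coordinates gives n(n-1) = sum over u of s_u(s_u - 1), where s_u is the support
  size of u. If every codeword had type 1^w (s_u = w) or 1^(w-2)2^1 (s_u = w - 1), b of them
  of the second type, this would read n(n-1) + 2b(w-1) = |C| w(w-1). The congruence
  hypothesis pins down the floor B(n) exactly: w(w-1) B(n) = n(n-1) - n(w-1)(w-2) - (2k+1)(w-1).
  Substituting |C| = B(n) + n leaves (w-1)(2k+1) = (w-1)(2n-2b), an odd number equal to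
  an even one.\<close>

lemma card_off_diagonal:
  assumes "finite A"
  shows "card {(i, j). i \<in> A \<and> j \<in> A \<and> i \<noteq> j} = card A * (card A - 1)"
proof -
  have "{(i, j). i \<in> A \<and> j \<in> A \<and> i \<noteq> j} = A \<times> A - (\<lambda>x. (x, x)) ` A" by auto
  moreover have "card ((\<lambda>x. (x, x)) ` A) = card A" by (rule card_image) (auto simp: inj_on_def)
  ultimately show ?thesis
    using assms by (simp add: card_Diff_subset card_cartesian_product diff_mult_distrib2 image_subset_iff)
qed

lemma balanced_sum_card_supp:
  assumes "finite C" and "balanced n C"
  shows "n * (n - 1) = (\<Sum>u\<in>C. card (supp n u) * (card (supp n u) - 1))"
proof -
  define P where "P u = {(i, j). i \<in> supp n u \<and> j \<in> supp n u \<and> i \<noteq> j}" for u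
  have supp_less: "supp n u \<subseteq> {..<n}" for u by (auto simp: supp_def)
  have cover: "{(i, j). i \<in> {..<n} \<and> j \<in> {..<n} \<and> i \<noteq> j} = (\<Union>u\<in>C. P u)"
  proof
    show "(\<Union>u\<in>C. P u) \<subseteq> {(i, j). i \<in> {..<n} \<and> j \<in> {..<n} \<and> i \<noteq> j}"
      using supp_less unfolding P_def by blast
    show "{(i, j). i \<in> {..<n} \<and> j \<in> {..<n} \<and> i \<noteq> j} \<subseteq> (\<Union>u\<in>C. P u)"
      using assms(2) unfolding balanced_def P_def by fastforce
  qed
  have disjoint: "P u \<inter> P v = {}" if "u \<in> C" "v \<in> C" "u \<noteq> v" for u v
  proof (rule ccontr)
    assume "P u \<inter> P v \<noteq> {}"
    then obtain i j where ij: "i \<noteq> j" "{i, j} \<subseteq> supp n u" "{i, j} \<subseteq> supp n v"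
      unfolding P_def by auto
    then have "i < n" "j < n" using supp_less by auto
    with \<open>i \<noteq> j\<close> have "\<exists>!x. x \<in> C \<and> {i, j} \<subseteq> supp n x"
      using assms(2) unfolding balanced_def by blast
    then show False using ij that by blast
  qed
  have finite_P: "finite (P u)" for u
    by (rule finite_subset[of _ "supp n u \<times> supp n u"]) (auto simp: P_def supp_def)
  have "n * (n - 1) = card {(i, j). i \<in> {..<n} \<and> j \<in> {..<n} \<and> i \<noteq> j}"
    using card_off_diagonal[of "{..<n}"] by simp
  also have "\<dots> = (\<Sum>u\<in>C. card (P u))"
    unfolding cover by (rule card_UN_disjoint) (use assms(1) finite_P disjoint in auto)
  also have "\<dots> = (\<Sum>u\<in>C. card (supp n u) * (card (supp n u) - 1))"
    unfolding P_def by (intro sum.cong refl card_off_diagonal) (simp add: supp_def)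
  finally show ?thesis .
qed

lemma card_supp_ternary_word:
  assumes "ternary_word n u"
  shows "card (supp n u) = card {i. i < n \<and> u i = 1} + card {i. i < n \<and> u i = 2}"
proof -
  have "supp n u = {i. i < n \<and> u i = 1} \<union> {i. i < n \<and> u i = 2}"
    using assms unfolding ternary_word_def supp_def by force
  then show ?thesis by (simp add: card_Un_disjoint disjoint_iff)
qed

lemma balanced_count_two_support_sizes:
  assumes "finite C" and "balanced n C"
    and "\<And>u. u \<in> C \<Longrightarrow> card (supp n u) = w \<or> card (supp n u) = w - 1"
  defines "b \<equiv> card {u \<in> C. card (supp n u) = w - 1}"
  shows "n * (n - 1) + 2 * b * (w - 1) = card C * (w * (w - 1))"
proof -
  define f where "f u = card (supp n u) * (card (supp n u) - 1)" for u
  define S where "S = {u \<in> C. card (supp n u) = w - 1}"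
  have "n * (n - 1) + 2 * b * (w - 1) = (\<Sum>u\<in>C. f u) + (\<Sum>u\<in>S. 2 * (w - 1))"
    using balanced_sum_card_supp[OF assms(1,2)] by (simp add: f_def S_def b_def)
  also have "\<dots> = (\<Sum>u\<in>C. f u + (if u \<in> S then 2 * (w - 1) else 0))"
    using assms(1) by (simp add: sum.distrib sum.If_cases S_def Collect_conj_eq)
  also have "\<dots> = (\<Sum>u\<in>C. w * (w - 1))"
  proof (rule sum.cong)
    fix u assume "u \<in> C"
    then show "f u + (if u \<in> S then 2 * (w - 1) else 0) = w * (w - 1)"
      using assms(3)[of u] by (cases w) (auto simp: f_def S_def algebra_simps)
  qed simp
  finally show ?thesis by simp
qed

lemma floor_divide_of_int_cong:
  fixes x r d :: int
  assumes "[x = r] (mod d)" and "0 \<le> r" and "r < d"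
  shows "d * \<lfloor>real_of_int x / real_of_int d\<rfloor> = x - r"
proof -
  have "x mod d = r" using assms by (simp add: cong_def)
  then show ?thesis by (simp add: floor_divide_of_int_eq flip: minus_mod_eq_mult_div)
qed

theorem lemma4:
  fixes n w :: nat and C :: "(nat \<Rightarrow> nat) set"
  assumes "w \<ge> 2" and "n > 0"
    and "[int n = 1] (mod (int w - 1))"
    and "\<exists>k::int. 0 \<le> k \<and> real_of_int k \<le> (real w - 3) / 2 \<and>
           [int n * (int n - 1) - int n * (int w - 1) * (int w - 2)
              = (2 * k + 1) * (int w - 1)] (mod (int w * (int w - 1)))"
    and "finite C"
    and "ternary_code n (2 * w - 2) w C"
    and "balanced n C"
    and "int (card C) =
           \<lfloor>real n * (real n - 1 - (real w - 1) * (real w - 2)) / (real w * (real w - 1))\<rfloor>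
           + int n"
  shows "\<exists>u\<in>C. \<not> has_type n w 0 u \<and> \<not> has_type n (w - 2) 1 u"
proof (rule ccontr)
  assume "\<not> ?thesis"
  then have sizes: "card (supp n u) = w \<or> card (supp n u) = w - 1" if "u \<in> C" for u
    using that assms(1,6) unfolding ternary_code_def has_type_def
    by (force simp: card_supp_ternary_word)
  obtain b where count: "n * (n - 1) + 2 * b * (w - 1) = card C * (w * (w - 1))"
    using balanced_count_two_support_sizes[OF assms(5,7) sizes] by blast
  obtain k :: int where "0 \<le> k" "real_of_int k \<le> (real w - 3) / 2"
    and cong: "[int n * (int n - 1) - int n * (int w - 1) * (int w - 2)
              = (2 * k + 1) * (int w - 1)] (mod (int w * (int w - 1)))"
    using assms(4) by blast
  then have "0 \<le> (2 * k + 1) * (int w - 1)" "(2 * k + 1) * (int w - 1) < int w * (int w - 1)"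
    using assms(1) by (auto intro!: mult_strict_right_mono)
  from floor_divide_of_int_cong[OF cong this]
  have "int w * (int w - 1) * (int (card C) - int n)
      = int n * (int n - 1) - int n * (int w - 1) * (int w - 2) - (2 * k + 1) * (int w - 1)"
    using assms(8) by (simp add: algebra_simps)
  moreover have "int n * (int n - 1) + 2 * int b * (int w - 1) = int (card C) * (int w * (int w - 1))"
    using arg_cong[OF count, of int] assms(1,2) by (simp add: of_nat_diff)
  ultimately have "(int w - 1) * (2 * k + 1) = (int w - 1) * (2 * int n - 2 * int b)"
    by (simp add: algebra_simps)
  then have "2 * k + 1 = 2 * (int n - int b)" using assms(1) by simp
  then show False by presburger
qed

end
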